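(* Let $\varphi$ be an Orlicz integrand. Then $C^\sigma_\varphi(\mu)\subset E^\sigma_\varphi(\mu)$. If $\varphi$ is real-valued, then the integrable simple functions (measurable, finitely-valued, vanishing outside a set of finite measure) are dense in $C^\sigma_\varphi(\mu)$.
   Context: $(\Omega,\mathcal{A},\mu)$ measure space with nontrivial positive measure, $X$ real Banach space. Orlicz integrand: $\varphi\colon\Omega\times X\to[0,\infty]$ with $\varphi(\omega,\cdot)$ even, convex, lsc, proper, $\varphi(\omega,x)\to0$ as $x\to0$, $\varphi(\omega,x)\to\infty$ as $\|x\|\to\infty$ for a.e. $\omega$, and restriction to $A\times W$ being $\mathcal{A}(A)\otimes\mathcal{B}(W)$-measurable for every set $A$ that is a union of countably many atoms and a $\sigma$-finite set and every separable $W\subset X$; real-valued means $\varphi(\omega,x)<\infty$ for all $x$ and a.e. $\omega$. $L_\varphi(\mu)$: a.e.-classes of strongly measurable $u$ with finite Luxemburg norm $\|u\|_\varphi=\inf\{\alpha>0:\int\varphi(\omega,u/\alpha)d\mu\le1\}$. $C^\sigma_\varphi(\mu)$: $u\in L_\varphi(\mu)$ vanishing outside a $\sigma$-finite set with $\|u\chi_{E_n}\|_\varphi\to0$ for every $E_n\in\mathcal{A}$ with $\chi_{E_n}\to0$ a.e. $E_\varphi(\mu)$: closure in $L_\varphi(\mu)$ of the simple functions belonging to $L_\varphi(\mu)$; $E^\sigma_\varphi(\mu)$: its elements vanishing outside a $\sigma$-finite set. *)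

theory Defs
  imports "HOL-Analysis.Analysis"
begin

definition is_atom :: "'a measure \<Rightarrow> 'a set \<Rightarrow> bool" where
  "is_atom M A \<longleftrightarrow> A \<in> sets M \<and> emeasure M A > 0 \<and>
     (\<forall>B \<in> sets M. B \<subseteq> A \<longrightarrow> emeasure M B = 0 \<or> emeasure M (A - B) = 0)"

definition sigma_finite_set :: "'a measure \<Rightarrow> 'a set \<Rightarrow> bool" where
  "sigma_finite_set M S \<longleftrightarrow> (\<exists>F :: nat \<Rightarrow> 'a set.
     (\<forall>n. F n \<in> sets M \<and> emeasure M (F n) < \<infinity>) \<and> S = (\<Union>n. F n))"

definition atoms_sigma_set :: "'a measure \<Rightarrow> 'a set \<Rightarrow> bool" where
  "atoms_sigma_set M A \<longleftrightarrow> (\<exists>\<A> S. countable \<A> \<and> (\<forall>B\<in>\<A>. is_atom M B) \<and>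
     sigma_finite_set M S \<and> A = \<Union>\<A> \<union> S)"

definition orlicz_integrand :: "'a measure \<Rightarrow> ('a \<Rightarrow> 'b::banach \<Rightarrow> ennreal) \<Rightarrow> bool" where
  "orlicz_integrand M \<phi> \<longleftrightarrow>
    (AE \<omega> in M.
        (\<forall>x. \<phi> \<omega> (- x) = \<phi> \<omega> x) \<and>
        (\<forall>x y (t::real). 0 \<le> t \<and> t \<le> 1 \<longrightarrow>
            \<phi> \<omega> (t *\<^sub>R x + (1 - t) *\<^sub>R y) \<le> ennreal t * \<phi> \<omega> x + ennreal (1 - t) * \<phi> \<omega> y) \<and>
        (\<forall>c. closed {x. \<phi> \<omega> x \<le> c}) \<and>
        (\<exists>x. \<phi> \<omega> x < \<infinity>) \<and>
        ((\<phi> \<omega> \<longlongrightarrow> 0) (at 0)) \<and>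
        ((\<phi> \<omega> \<longlongrightarrow> \<infinity>) at_infinity)) \<and>
    (\<forall>A W. atoms_sigma_set M A \<and> A \<subseteq> space M \<and> separable_space (top_of_set W) \<longrightarrow>
        (\<lambda>(\<omega>, x). \<phi> \<omega> x) \<in>
          borel_measurable (restrict_space M A \<Otimes>\<^sub>M restrict_space borel W))"

definition real_valued_integrand :: "'a measure \<Rightarrow> ('a \<Rightarrow> 'b \<Rightarrow> ennreal) \<Rightarrow> bool" where
  "real_valued_integrand M \<phi> \<longleftrightarrow> (AE \<omega> in M. \<forall>x. \<phi> \<omega> x < \<infinity>)"

definition strongly_measurable :: "'a measure \<Rightarrow> ('a \<Rightarrow> 'b::banach) \<Rightarrow> bool" where
  "strongly_measurable M u \<longleftrightarrow> (\<exists>s :: nat \<Rightarrow> 'a \<Rightarrow> 'b.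
     (\<forall>n. simple_function M (s n)) \<and> (AE \<omega> in M. (\<lambda>n. s n \<omega>) \<longlonglongrightarrow> u \<omega>))"

(* Luxemburg norm (value \<infinity> if the defining set is empty) *)
definition lux_norm :: "'a measure \<Rightarrow> ('a \<Rightarrow> 'b::banach \<Rightarrow> ennreal) \<Rightarrow> ('a \<Rightarrow> 'b) \<Rightarrow> ennreal" where
  "lux_norm M \<phi> u = Inf {ennreal \<alpha> | \<alpha>. \<alpha> > 0 \<and>
       (\<integral>\<^sup>+ \<omega>. \<phi> \<omega> ((1 / \<alpha>) *\<^sub>R u \<omega>) \<partial>M) \<le> 1}"

(* L_phi (as a set of representatives) *)
definition L_phi :: "'a measure \<Rightarrow> ('a \<Rightarrow> 'b::banach \<Rightarrow> ennreal) \<Rightarrow> ('a \<Rightarrow> 'b) set" where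
  "L_phi M \<phi> = {u. strongly_measurable M u \<and> lux_norm M \<phi> u < \<infinity>}"

definition vanishes_outside_sigma_finite :: "'a measure \<Rightarrow> ('a \<Rightarrow> 'b::zero) \<Rightarrow> bool" where
  "vanishes_outside_sigma_finite M u \<longleftrightarrow>
     (\<exists>S. sigma_finite_set M S \<and> (AE \<omega> in M. \<omega> \<notin> S \<longrightarrow> u \<omega> = 0))"

definition C_sigma_phi :: "'a measure \<Rightarrow> ('a \<Rightarrow> 'b::banach \<Rightarrow> ennreal) \<Rightarrow> ('a \<Rightarrow> 'b) set" where
  "C_sigma_phi M \<phi> = {u. u \<in> L_phi M \<phi> \<and> vanishes_outside_sigma_finite M u \<and>
     (\<forall>E :: nat \<Rightarrow> 'a set. (\<forall>n. E n \<in> sets M) \<and>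
         (AE \<omega> in M. (\<lambda>n. indicator (E n) \<omega> :: real) \<longlonglongrightarrow> 0) \<longrightarrow>
         (\<lambda>n. lux_norm M \<phi> (\<lambda>\<omega>. indicator (E n) \<omega> *\<^sub>R u \<omega>)) \<longlonglongrightarrow> 0)}"

definition E_phi :: "'a measure \<Rightarrow> ('a \<Rightarrow> 'b::banach \<Rightarrow> ennreal) \<Rightarrow> ('a \<Rightarrow> 'b) set" where
  "E_phi M \<phi> = {u. u \<in> L_phi M \<phi> \<and> (\<exists>s :: nat \<Rightarrow> 'a \<Rightarrow> 'b.
     (\<forall>n. simple_function M (s n) \<and> s n \<in> L_phi M \<phi>) \<and>
     (\<lambda>n. lux_norm M \<phi> (\<lambda>\<omega>. u \<omega> - s n \<omega>)) \<longlonglongrightarrow> 0)}"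

definition E_sigma_phi :: "'a measure \<Rightarrow> ('a \<Rightarrow> 'b::banach \<Rightarrow> ennreal) \<Rightarrow> ('a \<Rightarrow> 'b) set" where
  "E_sigma_phi M \<phi> = {u \<in> E_phi M \<phi>. vanishes_outside_sigma_finite M u}"

definition integrable_simple :: "'a measure \<Rightarrow> ('a \<Rightarrow> 'b::zero) \<Rightarrow> bool" where
  "integrable_simple M s \<longleftrightarrow> simple_function M s \<and>
     (\<exists>F \<in> sets M. emeasure M F < \<infinity> \<and> (\<forall>\<omega> \<in> space M - F. s \<omega> = 0))"

end

(* Fix \<epsilon> > 0 and let u in C^sigma_phi vanish outside a sigma-finite set S = (UN n. F n).
   Applied to the sets S - F n, the defining property of C^sigma_phi yields an F = F n of finite
   measure such that u restricted to S - F has Luxemburg norm below \<epsilon>/4. On F, u is a.e. a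
   limit of values of a sequence d j, and \<phi> \<omega> tends to 0 at 0, so for a.e. \<omega> some j has
   \<phi> \<omega> ((u \<omega> - d j) / \<epsilon>) < \<delta>. Choosing at each point the first such j among 0..K gives an
   integrable simple function s K with this bound on F except on sets B K shrinking to a null
   set, so the C^sigma_phi property also makes the norm of u on some B K smaller than \<epsilon>/4.
   With \<delta> * mu F <= 1/2, splitting the modular of (u - s K) / \<epsilon> over F - B K, B K and S - F
   bounds it by 1/2 + 1/4 + 1/4, hence the norm of u - s K is at most \<epsilon>. The approximants lie
   in L_phi by the triangle inequality, which gives the inclusion into E^sigma_phi. *)

theory Submission
  imports Defs
begin

abbreviation orlicz_modular :: "'a measure \<Rightarrow> ('a \<Rightarrow> 'b \<Rightarrow> ennreal) \<Rightarrow> ('a \<Rightarrow> 'b) \<Rightarrow> ennreal" where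
  "orlicz_modular M \<phi> v \<equiv> \<integral>\<^sup>+ \<omega>. \<phi> \<omega> (v \<omega>) \<partial>M"

section \<open>Strongly measurable functions\<close>

lemma strongly_measurable_simple_function:
  "simple_function M s \<Longrightarrow> strongly_measurable M s"
  unfolding strongly_measurable_def by (rule exI[of _ "\<lambda>n. s"]) auto

lemma strongly_measurable_compose2:
  fixes h :: "'b::banach \<Rightarrow> 'c::banach \<Rightarrow> 'd::banach"
  assumes "strongly_measurable M f" "strongly_measurable M g"
    and "continuous_on UNIV (\<lambda>p. h (fst p) (snd p))"
  shows "strongly_measurable M (\<lambda>\<omega>. h (f \<omega>) (g \<omega>))"
proof -
  obtain s where s: "\<And>n. simple_function M (s n)" "AE \<omega> in M. (\<lambda>n. s n \<omega>) \<longlonglongrightarrow> f \<omega>"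
    using assms(1) unfolding strongly_measurable_def by blast
  obtain t where t: "\<And>n. simple_function M (t n)" "AE \<omega> in M. (\<lambda>n. t n \<omega>) \<longlonglongrightarrow> g \<omega>"
    using assms(2) unfolding strongly_measurable_def by blast
  have "AE \<omega> in M. (\<lambda>n. h (s n \<omega>) (t n \<omega>)) \<longlonglongrightarrow> h (f \<omega>) (g \<omega>)"
    using s(2) t(2)
  proof eventually_elim
    case (elim \<omega>)
    from continuous_on_tendsto_compose[OF assms(3) tendsto_Pair[OF elim]]
    show ?case by simp
  qed
  moreover have "simple_function M (\<lambda>\<omega>. h (s n \<omega>) (t n \<omega>))" for n
    using s(1) t(1) by (rule simple_function_compose2)
  ultimately show ?thesis
    unfolding strongly_measurable_def by (intro exI[of _ "\<lambda>n \<omega>. h (s n \<omega>) (t n \<omega>)"]) blast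
qed

lemma strongly_measurable_diff:
  "strongly_measurable M f \<Longrightarrow> strongly_measurable M g \<Longrightarrow>
    strongly_measurable M (\<lambda>\<omega>. f \<omega> - g \<omega>)"
  using continuous_on_diff[OF continuous_on_fst continuous_on_snd, OF continuous_on_id continuous_on_id]
  by (rule strongly_measurable_compose2[where h = "\<lambda>x y. x - y", rotated 2])

lemma strongly_measurable_scaleR:
  "strongly_measurable M c \<Longrightarrow> strongly_measurable M f \<Longrightarrow>
    strongly_measurable M (\<lambda>\<omega>. c \<omega> *\<^sub>R f \<omega>)"
  using continuous_on_scaleR[OF continuous_on_fst continuous_on_snd, OF continuous_on_id continuous_on_id]
  by (rule strongly_measurable_compose2[where h = "\<lambda>x y. x *\<^sub>R y", rotated 2])

lemma strongly_measurable_scaleR_const: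
  "strongly_measurable M f \<Longrightarrow> strongly_measurable M (\<lambda>\<omega>. c *\<^sub>R f \<omega>)"
  by (rule strongly_measurable_scaleR[OF strongly_measurable_simple_function]) simp

lemma strongly_measurable_indicator_scaleR:
  "E \<in> sets M \<Longrightarrow> strongly_measurable M f \<Longrightarrow> strongly_measurable M (\<lambda>\<omega>. indicator E \<omega> *\<^sub>R f \<omega>)"
  by (rule strongly_measurable_scaleR[OF strongly_measurable_simple_function]) simp

lemma strongly_measurable_separably_valued:
  fixes v :: "'a \<Rightarrow> 'b::banach"
  assumes "strongly_measurable M v"
  obtains v' C where "v' \<in> borel_measurable M" "countable C" "C \<noteq> {}"
    "\<And>\<omega>. \<omega> \<in> space M \<Longrightarrow> v' \<omega> \<in> closure C" "AE \<omega> in M. v \<omega> = v' \<omega>"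
proof -
  obtain s where s: "\<And>n. simple_function M (s n)" "AE \<omega> in M. (\<lambda>n. s n \<omega>) \<longlonglongrightarrow> v \<omega>"
    using assms unfolding strongly_measurable_def by blast
  from s(2) obtain N where N: "{\<omega> \<in> space M. \<not> (\<lambda>n. s n \<omega>) \<longlonglongrightarrow> v \<omega>} \<subseteq> N"
    "emeasure M N = 0" "N \<in> sets M"
    by (rule AE_E)
  define s' where "s' n \<omega> = (if \<omega> \<in> N then 0 else s n \<omega>)" for n \<omega>
  define v' where "v' \<omega> = (if \<omega> \<in> N then 0 else v \<omega>)" for \<omega>
  define C where "C = insert 0 (\<Union>n. s' n ` space M)"
  have sf: "simple_function M (s' n)" for n
    unfolding s'_def using s(1) N(3) by (intro simple_function_If_set) auto
  have lim: "(\<lambda>n. s' n \<omega>) \<longlonglongrightarrow> v' \<omega>" if "\<omega> \<in> space M" for \<omega>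
    using N(1) that unfolding s'_def v'_def by auto
  show thesis
  proof (rule that[of v' C])
    show "v' \<in> borel_measurable M"
      by (rule borel_measurable_LIMSEQ_metric[OF borel_measurable_simple_function[OF sf] lim])
    have "countable (s' n ` space M)" for n
      using sf[of n] by (simp add: simple_function_def countable_finite)
    then show "countable C"
      unfolding C_def by simp
    show "v' \<omega> \<in> closure C" if "\<omega> \<in> space M" for \<omega>
      unfolding closure_sequential using lim[OF that] that
      by (intro exI[of _ "\<lambda>n. s' n \<omega>"]) (auto simp: C_def)
    have "AE \<omega> in M. \<omega> \<notin> N"
      using N(2,3) by (intro AE_I'[of N]) auto
    then show "AE \<omega> in M. v \<omega> = v' \<omega>"
      by eventually_elim (simp add: v'_def)
  qed (simp add: C_def)
qed

lemma sigma_finite_set_sets: "sigma_finite_set M S \<Longrightarrow> S \<in> sets M"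
  unfolding sigma_finite_set_def by auto

lemma sigma_finite_set_finite_measure:
  "F \<in> sets M \<Longrightarrow> emeasure M F < \<infinity> \<Longrightarrow> sigma_finite_set M F"
  unfolding sigma_finite_set_def by (intro exI[of _ "\<lambda>_. F"]) auto

lemma sigma_finite_set_incseq:
  assumes "sigma_finite_set M S"
  obtains F :: "nat \<Rightarrow> 'a set" where "incseq F" "\<And>n. F n \<in> sets M"
    "\<And>n. emeasure M (F n) < \<infinity>" "S = (\<Union>n. F n)"
proof -
  obtain G :: "nat \<Rightarrow> 'a set" where "\<forall>n. G n \<in> sets M \<and> emeasure M (G n) < \<infinity>"
    and G_S: "S = (\<Union>n. G n)"
    using assms unfolding sigma_finite_set_def by blast
  then have G: "\<And>n. G n \<in> sets M" "\<And>n. emeasure M (G n) < \<infinity>"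
    by auto
  show thesis
  proof (rule that[of "\<lambda>n. \<Union>i\<le>n. G i"])
    show "incseq (\<lambda>n. \<Union>i\<le>n. G i)"
      by (intro monoI UN_mono) auto
    show "(\<Union>i\<le>n. G i) \<in> sets M" for n
      using G(1) by auto
    show "S = (\<Union>n. \<Union>i\<le>n. G i)"
      unfolding G_S by auto
    show "emeasure M (\<Union>i\<le>n. G i) < \<infinity>" for n
    proof -
      have "emeasure M (\<Union>i\<le>n. G i) \<le> (\<Sum>i\<le>n. emeasure M (G i))"
        using G(1) by (intro emeasure_subadditive_finite) auto
      also have "\<dots> < \<infinity>"
        using G(2) by (simp add: less_top)
      finally show ?thesis .
    qed
  qed
qed

lemma sigma_finite_set_Un:
  assumes "sigma_finite_set M S" "sigma_finite_set M T"
  shows "sigma_finite_set M (S \<union> T)"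
proof -
  obtain F G :: "nat \<Rightarrow> 'a set" where
      F: "\<forall>n. F n \<in> sets M \<and> emeasure M (F n) < \<infinity>" "S = (\<Union>n. F n)"
    and G: "\<forall>n. G n \<in> sets M \<and> emeasure M (G n) < \<infinity>" "T = (\<Union>n. G n)"
    using assms unfolding sigma_finite_set_def by blast
  have "emeasure M (F n \<union> G n) < \<infinity>" for n
  proof -
    have "emeasure M (F n \<union> G n) \<le> emeasure M (F n) + emeasure M (G n)"
      using F(1) G(1) by (intro emeasure_subadditive) auto
    also have "\<dots> < \<infinity>"
      using F(1) G(1) by (simp add: less_top)
    finally show ?thesis .
  qed
  moreover have "S \<union> T = (\<Union>n. F n \<union> G n)"
    unfolding F(2) G(2) by auto
  ultimately show ?thesis
    unfolding sigma_finite_set_def using F(1) G(1) by (intro exI[of _ "\<lambda>n. F n \<union> G n"]) auto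
qed

lemma vanishes_outside_sigma_finite_scaleR:
  fixes v :: "'a \<Rightarrow> 'b::real_vector"
  assumes "vanishes_outside_sigma_finite M v"
  shows "vanishes_outside_sigma_finite M (\<lambda>\<omega>. c \<omega> *\<^sub>R v \<omega>)"
proof -
  obtain S where S: "sigma_finite_set M S" and v_S: "AE \<omega> in M. \<omega> \<notin> S \<longrightarrow> v \<omega> = 0"
    using assms unfolding vanishes_outside_sigma_finite_def by blast
  from v_S have "AE \<omega> in M. \<omega> \<notin> S \<longrightarrow> c \<omega> *\<^sub>R v \<omega> = 0"
    by eventually_elim simp
  with S show ?thesis
    unfolding vanishes_outside_sigma_finite_def by blast
qed

lemma vanishes_outside_sigma_finite_diff:
  fixes f g :: "'a \<Rightarrow> 'b::ab_group_add"
  assumes "vanishes_outside_sigma_finite M f" "vanishes_outside_sigma_finite M g"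
  shows "vanishes_outside_sigma_finite M (\<lambda>\<omega>. f \<omega> - g \<omega>)"
proof -
  obtain S T where S: "sigma_finite_set M S" "AE \<omega> in M. \<omega> \<notin> S \<longrightarrow> f \<omega> = 0"
    and T: "sigma_finite_set M T" "AE \<omega> in M. \<omega> \<notin> T \<longrightarrow> g \<omega> = 0"
    using assms unfolding vanishes_outside_sigma_finite_def by blast
  from S(2) T(2) have "AE \<omega> in M. \<omega> \<notin> S \<union> T \<longrightarrow> f \<omega> - g \<omega> = 0"
    by eventually_elim simp
  with sigma_finite_set_Un[OF S(1) T(1)] show ?thesis
    unfolding vanishes_outside_sigma_finite_def by blast
qed

lemma integrable_simple_vanishes_outside_sigma_finite:
  assumes "integrable_simple M s"
  shows "vanishes_outside_sigma_finite M s"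
proof -
  obtain F where "F \<in> sets M" "emeasure M F < \<infinity>" "\<forall>\<omega>\<in>space M - F. s \<omega> = 0"
    using assms unfolding integrable_simple_def by blast
  then show ?thesis
    unfolding vanishes_outside_sigma_finite_def
    by (intro exI[of _ F] conjI sigma_finite_set_finite_measure AE_I2) auto
qed

section \<open>Measurability of compositions with \<phi>\<close>

text \<open>Joint measurability of \<phi> is only granted on products with separable subsets of X,
  so v is first replaced by an a.e. equal measurable function with separable range.\<close>
lemma orlicz_integrand_comp_AE_measurable:
  fixes \<phi> :: "'a \<Rightarrow> 'b::banach \<Rightarrow> ennreal"
  assumes \<phi>: "orlicz_integrand M \<phi>" and S: "sigma_finite_set M S"
    and v: "strongly_measurable M v"
  obtains f where "f \<in> borel_measurable M" "\<And>\<omega>. \<omega> \<notin> S \<Longrightarrow> f \<omega> = 0"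
    "AE \<omega> in M. \<omega> \<in> S \<longrightarrow> \<phi> \<omega> (v \<omega>) = f \<omega>"
proof -
  obtain v' C where v': "v' \<in> borel_measurable M" "countable C"
    "\<And>\<omega>. \<omega> \<in> space M \<Longrightarrow> v' \<omega> \<in> closure C" "AE \<omega> in M. v \<omega> = v' \<omega>"
    using strongly_measurable_separably_valued[OF v] by metis
  have S_sets: "S \<in> sets M"
    using S by (rule sigma_finite_set_sets)
  have "atoms_sigma_set M S"
    unfolding atoms_sigma_set_def using S by (intro exI[of _ "{}"] exI[of _ S]) auto
  moreover have "separable_space (top_of_set (closure C))"
    unfolding separable_space_def using v'(2) closure_subset[of C]
    by (intro exI[of _ C]) (auto simp: closure_of_subtopology_open euclidean_closure_of)
  ultimately have \<phi>_meas: "(\<lambda>(\<omega>, x). \<phi> \<omega> x) \<in>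
      borel_measurable (restrict_space M S \<Otimes>\<^sub>M restrict_space borel (closure C))"
    using \<phi> sets.sets_into_space[OF S_sets] unfolding orlicz_integrand_def by blast
  have graph_meas: "(\<lambda>\<omega>. (\<omega>, v' \<omega>)) \<in>
      measurable (restrict_space M S) (restrict_space M S \<Otimes>\<^sub>M restrict_space borel (closure C))"
    using v'(1,3)
    by (intro measurable_Pair measurable_restrict_space2 measurable_restrict_space1)
      (auto simp: space_restrict_space)
  have "(\<lambda>\<omega>. \<phi> \<omega> (v' \<omega>)) \<in> borel_measurable (restrict_space M S)"
    using measurable_comp[OF graph_meas \<phi>_meas] by (simp add: o_def)
  then have "(\<lambda>\<omega>. \<phi> \<omega> (v' \<omega>) * indicator S \<omega>) \<in> borel_measurable M"
    using S_sets by (simp flip: borel_measurable_restrict_space_iff_ennreal)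
  moreover have "AE \<omega> in M. \<omega> \<in> S \<longrightarrow> \<phi> \<omega> (v \<omega>) = \<phi> \<omega> (v' \<omega>) * indicator S \<omega>"
    using v'(4) by eventually_elim simp
  ultimately show thesis
    by (intro that[of "\<lambda>\<omega>. \<phi> \<omega> (v' \<omega>) * indicator S \<omega>"]) auto
qed

lemma orlicz_integrand_comp_AE_measurable_seq:
  fixes \<phi> :: "'a \<Rightarrow> 'b::banach \<Rightarrow> ennreal" and v :: "nat \<Rightarrow> 'a \<Rightarrow> 'b"
  assumes \<phi>: "orlicz_integrand M \<phi>" and S: "sigma_finite_set M S"
    and v: "\<And>j. strongly_measurable M (v j)"
  shows "\<exists>f :: nat \<Rightarrow> 'a \<Rightarrow> ennreal. (\<forall>j. f j \<in> borel_measurable M) \<and>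
    (AE \<omega> in M. \<omega> \<in> S \<longrightarrow> (\<forall>j. \<phi> \<omega> (v j \<omega>) = f j \<omega>))"
proof -
  have "\<forall>j. \<exists>f. f \<in> borel_measurable M \<and> (AE \<omega> in M. \<omega> \<in> S \<longrightarrow> \<phi> \<omega> (v j \<omega>) = f \<omega>)"
  proof
    fix j
    show "\<exists>f. f \<in> borel_measurable M \<and> (AE \<omega> in M. \<omega> \<in> S \<longrightarrow> \<phi> \<omega> (v j \<omega>) = f \<omega>)"
    proof (rule orlicz_integrand_comp_AE_measurable[OF \<phi> S v])
      fix f
      assume "f \<in> borel_measurable M" "AE \<omega> in M. \<omega> \<in> S \<longrightarrow> \<phi> \<omega> (v j \<omega>) = f \<omega>"
      then show ?thesis
        by blast
    qed
  qed
  from choice[OF this] obtain f where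
    f: "\<forall>j. f j \<in> borel_measurable M \<and> (AE \<omega> in M. \<omega> \<in> S \<longrightarrow> \<phi> \<omega> (v j \<omega>) = f j \<omega>)"
    by blast
  then have "AE \<omega> in M. \<forall>j. \<omega> \<in> S \<longrightarrow> \<phi> \<omega> (v j \<omega>) = f j \<omega>"
    unfolding AE_all_countable by blast
  then have "AE \<omega> in M. \<omega> \<in> S \<longrightarrow> (\<forall>j. \<phi> \<omega> (v j \<omega>) = f j \<omega>)"
    by eventually_elim blast
  with f show ?thesis
    by blast
qed

section \<open>The Luxemburg norm\<close>

lemma lux_norm_le:
  "\<alpha> > 0 \<Longrightarrow> orlicz_modular M \<phi> (\<lambda>\<omega>. (1 / \<alpha>) *\<^sub>R v \<omega>) \<le> 1 \<Longrightarrow> lux_norm M \<phi> v \<le> ennreal \<alpha>"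
  unfolding lux_norm_def by (intro Inf_lower) auto

lemma lux_norm_less_iff:
  "lux_norm M \<phi> v < c \<longleftrightarrow>
    (\<exists>\<alpha>>0. ennreal \<alpha> < c \<and> orlicz_modular M \<phi> (\<lambda>\<omega>. (1 / \<alpha>) *\<^sub>R v \<omega>) \<le> 1)"
  unfolding lux_norm_def Inf_less_iff by auto

lemma lux_norm_zero_finite_imp_zero:
  assumes "lux_norm M \<phi> (\<lambda>_. 0) < \<infinity>"
  shows "lux_norm M \<phi> (\<lambda>_. 0) = 0"
proof -
  have "orlicz_modular M \<phi> (\<lambda>_. 0) \<le> 1"
    using assms unfolding lux_norm_less_iff by auto
  have "lux_norm M \<phi> (\<lambda>_. 0) \<le> 0"
  proof (rule ennreal_le_epsilon)
    fix \<epsilon> :: real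
    assume "0 < \<epsilon>"
    then show "lux_norm M \<phi> (\<lambda>_. 0) \<le> 0 + ennreal \<epsilon>"
      using lux_norm_le[of \<epsilon> M \<phi> "\<lambda>_. 0"] \<open>orlicz_modular M \<phi> (\<lambda>_. 0) \<le> 1\<close> by simp
  qed
  then show ?thesis
    by simp
qed

lemma C_sigma_phi_eventually_small:
  assumes "u \<in> C_sigma_phi M \<phi>" "\<And>n. E n \<in> sets M"
    and "AE \<omega> in M. (\<lambda>n. indicator (E n) \<omega> :: real) \<longlonglongrightarrow> 0" and "\<eta> > 0"
  obtains n where "lux_norm M \<phi> (\<lambda>\<omega>. indicator (E n) \<omega> *\<^sub>R u \<omega>) < \<eta>"
proof -
  have "(\<lambda>n. lux_norm M \<phi> (\<lambda>\<omega>. indicator (E n) \<omega> *\<^sub>R u \<omega>)) \<longlonglongrightarrow> 0"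
    using assms(1-3) unfolding C_sigma_phi_def by blast
  from order_tendstoD(2)[OF this assms(4)] that show thesis
    by (auto simp: eventually_sequentially)
qed

lemma C_sigma_phi_tail_small:
  assumes "u \<in> C_sigma_phi M \<phi>" "\<eta> > 0"
  obtains S F where "sigma_finite_set M S" "AE \<omega> in M. \<omega> \<notin> S \<longrightarrow> u \<omega> = 0"
    "F \<in> sets M" "emeasure M F < \<infinity>" "F \<subseteq> S"
    "lux_norm M \<phi> (\<lambda>\<omega>. indicator (S - F) \<omega> *\<^sub>R u \<omega>) < \<eta>"
proof -
  obtain S where S: "sigma_finite_set M S" and u_S: "AE \<omega> in M. \<omega> \<notin> S \<longrightarrow> u \<omega> = 0"
    using assms(1) unfolding C_sigma_phi_def vanishes_outside_sigma_finite_def by blast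
  obtain F where F: "incseq F" "\<And>n. F n \<in> sets M" "\<And>n. emeasure M (F n) < \<infinity>"
    "S = (\<Union>n. F n)"
    using sigma_finite_set_incseq[OF S] by metis
  have "(\<lambda>n. indicator (S - F n) \<omega> :: real) \<longlonglongrightarrow> 0" for \<omega>
  proof (cases "\<omega> \<in> S")
    case True
    then obtain i where "\<omega> \<in> F i"
      unfolding F(4) by blast
    then have "\<forall>n\<ge>i. indicator (S - F n) \<omega> = (0::real)"
      using incseqD[OF F(1)] by (fastforce simp: indicator_def)
    then show ?thesis
      by (intro tendsto_eventually) (auto simp: eventually_sequentially)
  qed simp
  then have "AE \<omega> in M. (\<lambda>n. indicator (S - F n) \<omega> :: real) \<longlonglongrightarrow> 0"
    by simp
  moreover have "S - F n \<in> sets M" for n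
    using sigma_finite_set_sets[OF S] F(2) by auto
  ultimately obtain n where "lux_norm M \<phi> (\<lambda>\<omega>. indicator (S - F n) \<omega> *\<^sub>R u \<omega>) < \<eta>"
    using C_sigma_phi_eventually_small[OF assms(1) _ _ assms(2)] by metis
  with S u_S F show thesis
    by (intro that[of S "F n"]) auto
qed

lemma C_sigma_phi_zero_space:
  fixes \<phi> :: "'a \<Rightarrow> 'b::banach \<Rightarrow> ennreal"
  assumes "\<forall>x::'b. x = 0" and u: "u \<in> C_sigma_phi M \<phi>"
  shows "\<exists>s. (\<forall>n::nat. integrable_simple M (s n) \<and> s n \<in> L_phi M \<phi>) \<and>
    (\<lambda>n. lux_norm M \<phi> (\<lambda>\<omega>. u \<omega> - s n \<omega>)) \<longlonglongrightarrow> 0"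
proof -
  have u_0: "u = (\<lambda>_. 0)"
    using assms(1) by blast
  have "u \<in> L_phi M \<phi>"
    using u unfolding C_sigma_phi_def by blast
  then have "lux_norm M \<phi> (\<lambda>_. 0) = 0"
    unfolding u_0 L_phi_def by (intro lux_norm_zero_finite_imp_zero) simp
  moreover have "integrable_simple M (\<lambda>_. 0 :: 'b)"
    unfolding integrable_simple_def by (intro conjI bexI[of _ "{}"]) auto
  ultimately show ?thesis
    using \<open>u \<in> L_phi M \<phi>\<close> unfolding u_0 by (intro exI[of _ "\<lambda>_ _. 0"]) simp
qed

text \<open>The properties of \<open>\<phi> \<omega>\<close> used below. \<open>p 0 = 0\<close> is not an axiom of an Orlicz integrand;
  it follows from the others when X has a nonzero vector, but not in the zero space, where
  the filter \<open>at 0\<close> is trivial.\<close>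
definition orlicz_function :: "('b::real_normed_vector \<Rightarrow> ennreal) \<Rightarrow> bool" where
  "orlicz_function p \<longleftrightarrow> p 0 = 0 \<and> (\<forall>x. p (- x) = p x) \<and>
     (\<forall>x y (t::real). 0 \<le> t \<and> t \<le> 1 \<longrightarrow>
        p (t *\<^sub>R x + (1 - t) *\<^sub>R y) \<le> ennreal t * p x + ennreal (1 - t) * p y) \<and>
     (p \<longlongrightarrow> 0) (at 0)"

lemma even_convex_tendsto_at_zero_imp_zero:
  fixes p :: "'b::real_normed_vector \<Rightarrow> ennreal" and e :: 'b
  assumes "e \<noteq> 0" and even: "\<And>x. p (- x) = p x"
    and convex: "\<And>x y (t::real). 0 \<le> t \<Longrightarrow> t \<le> 1 \<Longrightarrow>
        p (t *\<^sub>R x + (1 - t) *\<^sub>R y) \<le> ennreal t * p x + ennreal (1 - t) * p y"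
    and lim: "(p \<longlongrightarrow> 0) (at 0)"
  shows "p 0 = 0"
proof -
  define x where "x n = (1 / real (Suc n)) *\<^sub>R e" for n
  have "x \<longlonglongrightarrow> 0"
    unfolding x_def using tendsto_scaleR[OF LIMSEQ_Suc[OF lim_const_over_n] tendsto_const[of e]] by simp
  then have "filterlim x (at 0) sequentially"
    using \<open>e \<noteq> 0\<close> by (intro filterlim_atI) (auto simp: x_def)
  then have px: "(\<lambda>n. p (x n)) \<longlonglongrightarrow> 0"
    by (rule filterlim_compose[OF lim])
  have "p 0 \<le> p (x n)" for n
  proof -
    have "p 0 = p ((1/2::real) *\<^sub>R x n + (1 - 1/2) *\<^sub>R (- x n))"
      by (simp add: scaleR_right_diff_distrib)
    also have "\<dots> \<le> ennreal (1/2) * p (x n) + ennreal (1/2) * p (- x n)"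
      using convex[of "1/2" "x n" "- x n"] by simp
    also have "\<dots> = (ennreal (1/2) + ennreal (1/2)) * p (x n)"
      by (simp add: even distrib_right)
    also have "ennreal (1/2) + ennreal (1/2) = 1"
      using ennreal_plus[of "1/2" "1/2"] by simp
    finally show ?thesis by simp
  qed
  then have "p 0 \<le> 0"
    by (intro LIMSEQ_le_const[OF px]) auto
  then show ?thesis by simp
qed

lemma orlicz_function_scaleR_le:
  assumes "orlicz_function p" "0 \<le> t" "t \<le> 1"
  shows "p (t *\<^sub>R x) \<le> ennreal t * p x"
proof -
  have "p (t *\<^sub>R x) = p (t *\<^sub>R x + (1 - t) *\<^sub>R 0)"
    by simp
  also have "\<dots> \<le> ennreal t * p x + ennreal (1 - t) * p 0"
    using assms unfolding orlicz_function_def by blast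
  finally show ?thesis
    using assms(1) by (simp add: orlicz_function_def)
qed

lemma orlicz_function_small_near_zero:
  assumes "orlicz_function p" "\<delta> > 0"
  obtains r where "r > 0" "\<And>x. norm x < r \<Longrightarrow> p x < \<delta>"
proof -
  have "eventually (\<lambda>x. p x < \<delta>) (at 0)"
    using assms unfolding orlicz_function_def by (blast intro: order_tendstoD(2))
  then obtain r where "r > 0" "\<And>x. x \<noteq> 0 \<Longrightarrow> dist x 0 < r \<Longrightarrow> p x < \<delta>"
    unfolding eventually_at by blast
  moreover have "p 0 < \<delta>"
    using assms by (simp add: orlicz_function_def)
  ultimately show thesis
    by (intro that[of r]) (auto simp: dist_norm, metis norm_zero)
qed

section \<open>Approximation by integrable simple functions\<close>

lemma simple_function_least_index:
  fixes f :: "nat \<Rightarrow> 'a \<Rightarrow> ennreal" and d :: "nat \<Rightarrow> 'b::zero"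
  assumes [measurable]: "\<And>j. f j \<in> borel_measurable M" "G \<in> sets M"
    and "\<And>\<omega>. \<omega> \<in> G \<Longrightarrow> \<exists>j\<le>K. f j \<omega> \<le> c"
  shows "simple_function M (\<lambda>\<omega>. if \<omega> \<in> G then d (LEAST j. f j \<omega> \<le> c) else 0)"
  unfolding simple_function_eq_measurable
proof
  have "(LEAST j. f j \<omega> \<le> c) \<le> K" if "\<omega> \<in> G" for \<omega>
    using assms(3)[OF that] by (meson Least_le order_trans)
  then have "(\<lambda>\<omega>. if \<omega> \<in> G then d (LEAST j. f j \<omega> \<le> c) else 0) ` space M \<subseteq> insert 0 (d ` {..K})"
    by (auto simp: image_subset_iff)
  then show "finite ((\<lambda>\<omega>. if \<omega> \<in> G then d (LEAST j. f j \<omega> \<le> c) else 0) ` space M)"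
    by (rule finite_subset) simp
  show "(\<lambda>\<omega>. if \<omega> \<in> G then d (LEAST j. f j \<omega> \<le> c) else 0) \<in> measurable M (count_space UNIV)"
    by measurable
qed

lemma AE_indicator_no_good_index_tendsto_zero:
  fixes f :: "nat \<Rightarrow> 'a \<Rightarrow> ennreal"
  assumes "AE \<omega> in M. \<omega> \<in> F \<longrightarrow> (\<exists>j. f j \<omega> < \<delta>)"
  shows "AE \<omega> in M.
    (\<lambda>K. indicator {\<omega> \<in> space M. \<omega> \<in> F \<and> (\<forall>j\<le>K. \<delta> < f j \<omega>)} \<omega> :: real) \<longlonglongrightarrow> 0"
  using assms
proof eventually_elim
  case (elim \<omega>)
  have "\<forall>\<^sub>F K in sequentially. \<omega> \<notin> {\<omega> \<in> space M. \<omega> \<in> F \<and> (\<forall>j\<le>K. \<delta> < f j \<omega>)}"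
  proof (cases "\<omega> \<in> F")
    case True
    with elim obtain j where "f j \<omega> < \<delta>"
      by blast
    then show ?thesis
      unfolding eventually_sequentially by (auto simp: not_less intro!: exI[of _ j])
  qed simp
  then show ?case
    by (rule tendsto_eventually[OF eventually_mono]) simp
qed

lemma ennreal_small_multiple:
  fixes x :: ennreal
  assumes "x < \<infinity>" "c > 0"
  obtains \<delta> :: ennreal where "\<delta> > 0" "\<delta> * x \<le> ennreal c"
proof -
  define m where "m = enn2real x"
  have "m \<ge> 0" "x = ennreal m"
    using assms(1) by (auto simp: m_def less_top)
  have "ennreal (c / (m + 1)) * x = ennreal (c / (m + 1) * m)"
    unfolding \<open>x = ennreal m\<close> using \<open>m \<ge> 0\<close> by (rule ennreal_mult''[symmetric])
  also have "\<dots> \<le> ennreal c"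
    by (rule ennreal_leI) (use \<open>m \<ge> 0\<close> \<open>c > 0\<close> in \<open>simp add: field_simps\<close>)
  finally show thesis
    using \<open>c > 0\<close> \<open>m \<ge> 0\<close> by (intro that[of "ennreal (c / (m + 1))"]) auto
qed

locale nontrivial_orlicz_integrand =
  fixes M :: "'a measure" and \<phi> :: "'a \<Rightarrow> 'b::banach \<Rightarrow> ennreal"
  assumes orlicz_integrand: "orlicz_integrand M \<phi>"
    and nonzero_vector: "\<exists>e::'b. e \<noteq> 0"
begin

lemma AE_orlicz_function: "AE \<omega> in M. orlicz_function (\<phi> \<omega>)"
proof -
  obtain e :: 'b where "e \<noteq> 0"
    using nonzero_vector by blast
  have "AE \<omega> in M. (\<forall>x. \<phi> \<omega> (- x) = \<phi> \<omega> x) \<and>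
      (\<forall>x y (t::real). 0 \<le> t \<and> t \<le> 1 \<longrightarrow>
        \<phi> \<omega> (t *\<^sub>R x + (1 - t) *\<^sub>R y) \<le> ennreal t * \<phi> \<omega> x + ennreal (1 - t) * \<phi> \<omega> y) \<and>
      (\<phi> \<omega> \<longlongrightarrow> 0) (at 0)"
    using orlicz_integrand unfolding orlicz_integrand_def by (elim conjE eventually_mono) blast
  then show ?thesis
  proof eventually_elim
    case (elim \<omega>)
    then show ?case
      unfolding orlicz_function_def
      using even_convex_tendsto_at_zero_imp_zero[OF \<open>e \<noteq> 0\<close>, of "\<phi> \<omega>"] by blast
  qed
qed

lemma AE_borel_measurable_comp:
  assumes "strongly_measurable M v" "vanishes_outside_sigma_finite M v"
  obtains f where "f \<in> borel_measurable M" "AE \<omega> in M. \<phi> \<omega> (v \<omega>) = f \<omega>"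
proof -
  obtain S where S: "sigma_finite_set M S" and v_S: "AE \<omega> in M. \<omega> \<notin> S \<longrightarrow> v \<omega> = 0"
    using assms(2) unfolding vanishes_outside_sigma_finite_def by blast
  obtain f where f: "f \<in> borel_measurable M" "\<And>\<omega>. \<omega> \<notin> S \<Longrightarrow> f \<omega> = 0"
    "AE \<omega> in M. \<omega> \<in> S \<longrightarrow> \<phi> \<omega> (v \<omega>) = f \<omega>"
    using orlicz_integrand_comp_AE_measurable[OF orlicz_integrand S assms(1)] by metis
  have "AE \<omega> in M. \<phi> \<omega> (v \<omega>) = f \<omega>"
    using f(3) v_S AE_orlicz_function
    by eventually_elim (use f(2) in \<open>auto simp: orlicz_function_def\<close>)
  with f(1) show thesis
    by (rule that)
qed

lemma modular_le_of_lux_norm_less: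
  assumes v: "strongly_measurable M v" "vanishes_outside_sigma_finite M v"
    and lux: "lux_norm M \<phi> v < ennreal (t * \<epsilon>)" and "t \<le> 1" "\<epsilon> > 0"
  shows "orlicz_modular M \<phi> (\<lambda>\<omega>. (1 / \<epsilon>) *\<^sub>R v \<omega>) \<le> ennreal t"
proof -
  obtain \<alpha> where \<alpha>: "\<alpha> > 0" "ennreal \<alpha> < ennreal (t * \<epsilon>)"
    and modular_\<alpha>: "orlicz_modular M \<phi> (\<lambda>\<omega>. (1 / \<alpha>) *\<^sub>R v \<omega>) \<le> 1"
    using lux unfolding lux_norm_less_iff by blast
  define c where "c = \<alpha> / \<epsilon>"
  have c: "0 \<le> c" "c \<le> t"
    using \<alpha> \<open>\<epsilon> > 0\<close> by (auto simp: c_def field_simps ennreal_less_iff)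
  obtain f where f: "f \<in> borel_measurable M" "AE \<omega> in M. \<phi> \<omega> ((1 / \<alpha>) *\<^sub>R v \<omega>) = f \<omega>"
    using AE_borel_measurable_comp[OF strongly_measurable_scaleR_const vanishes_outside_sigma_finite_scaleR]
      v by metis
  have "AE \<omega> in M. \<phi> \<omega> ((1 / \<epsilon>) *\<^sub>R v \<omega>) \<le> ennreal c * f \<omega>"
    using AE_orlicz_function f(2)
  proof eventually_elim
    case (elim \<omega>)
    have "(1 / \<epsilon>) *\<^sub>R v \<omega> = c *\<^sub>R ((1 / \<alpha>) *\<^sub>R v \<omega>)"
      using \<alpha>(1) \<open>\<epsilon> > 0\<close> by (simp add: c_def)
    also have "\<phi> \<omega> \<dots> \<le> ennreal c * \<phi> \<omega> ((1 / \<alpha>) *\<^sub>R v \<omega>)"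
      using c \<open>t \<le> 1\<close> by (intro orlicz_function_scaleR_le[OF elim(1)]) auto
    finally show ?case
      using elim(2) by simp
  qed
  then have "orlicz_modular M \<phi> (\<lambda>\<omega>. (1 / \<epsilon>) *\<^sub>R v \<omega>) \<le> (\<integral>\<^sup>+ \<omega>. ennreal c * f \<omega> \<partial>M)"
    by (rule nn_integral_mono_AE)
  also have "\<dots> = ennreal c * orlicz_modular M \<phi> (\<lambda>\<omega>. (1 / \<alpha>) *\<^sub>R v \<omega>)"
    using f by (simp add: nn_integral_cmult nn_integral_cong_AE)
  also have "\<dots> \<le> ennreal c * 1"
    using modular_\<alpha> by (rule mult_left_mono) simp
  also have "\<dots> \<le> ennreal t"
    using c(2) by (simp add: ennreal_leI)
  finally show ?thesis .
qed

lemma lux_norm_diff_le: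
  assumes a: "strongly_measurable M a" "vanishes_outside_sigma_finite M a"
    and b: "strongly_measurable M b" "vanishes_outside_sigma_finite M b"
    and "\<alpha> > 0" "orlicz_modular M \<phi> (\<lambda>\<omega>. (1 / \<alpha>) *\<^sub>R a \<omega>) \<le> 1"
    and "\<beta> > 0" "orlicz_modular M \<phi> (\<lambda>\<omega>. (1 / \<beta>) *\<^sub>R b \<omega>) \<le> 1"
  shows "lux_norm M \<phi> (\<lambda>\<omega>. a \<omega> - b \<omega>) \<le> ennreal (\<alpha> + \<beta>)"
proof (rule lux_norm_le)
  obtain fa where fa: "fa \<in> borel_measurable M" "AE \<omega> in M. \<phi> \<omega> ((1 / \<alpha>) *\<^sub>R a \<omega>) = fa \<omega>"
    using AE_borel_measurable_comp[OF strongly_measurable_scaleR_const vanishes_outside_sigma_finite_scaleR]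
      a by metis
  obtain fb where fb: "fb \<in> borel_measurable M" "AE \<omega> in M. \<phi> \<omega> ((1 / \<beta>) *\<^sub>R b \<omega>) = fb \<omega>"
    using AE_borel_measurable_comp[OF strongly_measurable_scaleR_const vanishes_outside_sigma_finite_scaleR]
      b by metis
  define t where "t = \<alpha> / (\<alpha> + \<beta>)"
  have t: "0 \<le> t" "t \<le> 1" "1 - t = \<beta> / (\<alpha> + \<beta>)"
    using \<open>\<alpha> > 0\<close> \<open>\<beta> > 0\<close> by (auto simp: t_def field_simps)
  \<comment> \<open>\<open>(a - b)/(\<alpha> + \<beta>)\<close> is a convex combination of \<open>a/\<alpha>\<close> and \<open>-b/\<beta>\<close>\<close>
  have "AE \<omega> in M. \<phi> \<omega> ((1 / (\<alpha> + \<beta>)) *\<^sub>R (a \<omega> - b \<omega>)) \<le> ennreal t * fa \<omega> + ennreal (1 - t) * fb \<omega>"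
    using AE_orlicz_function fa(2) fb(2)
  proof eventually_elim
    case (elim \<omega>)
    have "(1 / (\<alpha> + \<beta>)) *\<^sub>R (a \<omega> - b \<omega>) =
        t *\<^sub>R ((1 / \<alpha>) *\<^sub>R a \<omega>) + (1 - t) *\<^sub>R (- ((1 / \<beta>) *\<^sub>R b \<omega>))"
      using \<open>\<alpha> > 0\<close> \<open>\<beta> > 0\<close> t(3) by (simp add: t_def scaleR_diff_right)
    with elim(1) t(1,2) show ?case
      unfolding orlicz_function_def elim(2,3)[symmetric] by metis
  qed
  then have "orlicz_modular M \<phi> (\<lambda>\<omega>. (1 / (\<alpha> + \<beta>)) *\<^sub>R (a \<omega> - b \<omega>)) \<le>
      (\<integral>\<^sup>+ \<omega>. ennreal t * fa \<omega> + ennreal (1 - t) * fb \<omega> \<partial>M)"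
    by (rule nn_integral_mono_AE)
  also have "\<dots> = ennreal t * (\<integral>\<^sup>+ \<omega>. fa \<omega> \<partial>M) + ennreal (1 - t) * (\<integral>\<^sup>+ \<omega>. fb \<omega> \<partial>M)"
    using fa(1) fb(1) by (simp add: nn_integral_add nn_integral_cmult)
  also have "\<dots> \<le> ennreal t * 1 + ennreal (1 - t) * 1"
    using assms(6,8) fa(2) fb(2) by (intro add_mono mult_left_mono) (simp_all add: nn_integral_cong_AE)
  also have "\<dots> = 1"
    using t by (simp flip: ennreal_plus)
  finally show "orlicz_modular M \<phi> (\<lambda>\<omega>. (1 / (\<alpha> + \<beta>)) *\<^sub>R (a \<omega> - b \<omega>)) \<le> 1" .
qed (use \<open>\<alpha> > 0\<close> \<open>\<beta> > 0\<close> in simp)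

lemma orlicz_modular_le_add:
  assumes v: "strongly_measurable M v" "vanishes_outside_sigma_finite M v"
    and w: "strongly_measurable M w" "vanishes_outside_sigma_finite M w"
    and h: "h \<in> borel_measurable M"
    and le: "AE \<omega> in M. \<phi> \<omega> (x \<omega>) \<le> h \<omega> + \<phi> \<omega> (v \<omega>) + \<phi> \<omega> (w \<omega>)"
  shows "orlicz_modular M \<phi> x \<le> integral\<^sup>N M h + orlicz_modular M \<phi> v + orlicz_modular M \<phi> w"
proof -
  obtain fv where fv: "fv \<in> borel_measurable M" "AE \<omega> in M. \<phi> \<omega> (v \<omega>) = fv \<omega>"
    using AE_borel_measurable_comp[OF v] by metis
  obtain fw where fw: "fw \<in> borel_measurable M" "AE \<omega> in M. \<phi> \<omega> (w \<omega>) = fw \<omega>"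
    using AE_borel_measurable_comp[OF w] by metis
  have "AE \<omega> in M. \<phi> \<omega> (x \<omega>) \<le> h \<omega> + fv \<omega> + fw \<omega>"
    using le fv(2) fw(2) by eventually_elim simp
  then have "orlicz_modular M \<phi> x \<le> (\<integral>\<^sup>+ \<omega>. h \<omega> + fv \<omega> + fw \<omega> \<partial>M)"
    by (rule nn_integral_mono_AE)
  also have "\<dots> = integral\<^sup>N M h + integral\<^sup>N M fv + integral\<^sup>N M fw"
    using h fv(1) fw(1) by (simp add: nn_integral_add)
  also have "\<dots> = integral\<^sup>N M h + orlicz_modular M \<phi> v + orlicz_modular M \<phi> w"
    using fv(2) fw(2) by (simp add: nn_integral_cong_AE)
  finally show ?thesis .
qed

lemma AE_exists_countable_small_modular:
  assumes "strongly_measurable M u" "\<epsilon> > 0" "\<delta> > 0"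
  obtains d :: "nat \<Rightarrow> 'b" where "AE \<omega> in M. \<exists>j. \<phi> \<omega> ((1 / \<epsilon>) *\<^sub>R (u \<omega> - d j)) < \<delta>"
proof -
  obtain v' C where C: "countable C" "C \<noteq> {}" and v': "\<And>\<omega>. \<omega> \<in> space M \<Longrightarrow> v' \<omega> \<in> closure C"
    and u_v': "AE \<omega> in M. u \<omega> = v' \<omega>"
    using strongly_measurable_separably_valued[OF assms(1)] by metis
  define d where "d = from_nat_into C"
  have "AE \<omega> in M. \<exists>j. \<phi> \<omega> ((1 / \<epsilon>) *\<^sub>R (u \<omega> - d j)) < \<delta>"
    using AE_orlicz_function u_v' AE_space
  proof eventually_elim
    case (elim \<omega>)
    obtain r where "r > 0" and r: "\<And>x. norm x < r \<Longrightarrow> \<phi> \<omega> x < \<delta>"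
      using orlicz_function_small_near_zero[OF elim(1) \<open>\<delta> > 0\<close>] by metis
    have "u \<omega> \<in> closure (range d)"
      using v'[OF elim(3)] elim(2) C by (simp add: d_def)
    then obtain j where "dist (d j) (u \<omega>) < r * \<epsilon>"
      using \<open>r > 0\<close> \<open>\<epsilon> > 0\<close> unfolding closure_approachable by (metis mult_pos_pos rangeE)
    then have "norm (u \<omega> - d j) / \<epsilon> < r"
      using \<open>\<epsilon> > 0\<close> by (simp add: dist_norm norm_minus_commute divide_less_eq mult.commute)
    then have "norm ((1 / \<epsilon>) *\<^sub>R (u \<omega> - d j)) < r"
      using \<open>\<epsilon> > 0\<close> by simp
    then show ?case
      using r by blast
  qed
  then show thesis
    by (rule that)
qed

lemma countable_family_small_modular:
  assumes u: "strongly_measurable M u" and F: "F \<in> sets M" "emeasure M F < \<infinity>"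
    and "\<epsilon> > 0" "\<delta> > 0"
  shows "\<exists>(d :: nat \<Rightarrow> 'b) (f :: nat \<Rightarrow> 'a \<Rightarrow> ennreal). (\<forall>j. f j \<in> borel_measurable M) \<and>
    (AE \<omega> in M. \<omega> \<in> F \<longrightarrow>
      (\<forall>j. \<phi> \<omega> ((1 / \<epsilon>) *\<^sub>R (u \<omega> - d j)) = f j \<omega>) \<and> (\<exists>j. f j \<omega> < \<delta>))"
proof -
  obtain d :: "nat \<Rightarrow> 'b" where d: "AE \<omega> in M. \<exists>j. \<phi> \<omega> ((1 / \<epsilon>) *\<^sub>R (u \<omega> - d j)) < \<delta>"
    by (rule AE_exists_countable_small_modular[OF u \<open>\<epsilon> > 0\<close> \<open>\<delta> > 0\<close>])
  have u_d: "strongly_measurable M (\<lambda>\<omega>. (1 / \<epsilon>) *\<^sub>R (u \<omega> - d j))" for j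
    by (intro strongly_measurable_scaleR_const strongly_measurable_diff u
        strongly_measurable_simple_function simple_function_const)
  obtain f :: "nat \<Rightarrow> 'a \<Rightarrow> ennreal" where f: "(\<forall>j. f j \<in> borel_measurable M) \<and>
      (AE \<omega> in M. \<omega> \<in> F \<longrightarrow> (\<forall>j. \<phi> \<omega> ((1 / \<epsilon>) *\<^sub>R (u \<omega> - d j)) = f j \<omega>))"
    using orlicz_integrand_comp_AE_measurable_seq[OF orlicz_integrand
        sigma_finite_set_finite_measure[OF F] u_d] ..
  from f have "AE \<omega> in M. \<omega> \<in> F \<longrightarrow> (\<forall>j. \<phi> \<omega> ((1 / \<epsilon>) *\<^sub>R (u \<omega> - d j)) = f j \<omega>)"
    by simp
  with d have "AE \<omega> in M. \<omega> \<in> F \<longrightarrow>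
      (\<forall>j. \<phi> \<omega> ((1 / \<epsilon>) *\<^sub>R (u \<omega> - d j)) = f j \<omega>) \<and> (\<exists>j. f j \<omega> < \<delta>)"
    by eventually_elim auto
  with f show ?thesis
    by (intro exI[of _ d] exI[of _ f]) simp
qed

lemma simple_approx_off_vanishing_sets:
  assumes u: "strongly_measurable M u" and F: "F \<in> sets M" "emeasure M F < \<infinity>"
    and "\<epsilon> > 0" "\<delta> > 0"
  obtains B :: "nat \<Rightarrow> 'a set" and s :: "nat \<Rightarrow> 'a \<Rightarrow> 'b" where
    "\<And>K. B K \<in> sets M" "\<And>K. B K \<subseteq> F" "AE \<omega> in M. (\<lambda>K. indicator (B K) \<omega> :: real) \<longlonglongrightarrow> 0"
    "\<And>K. simple_function M (s K)" "\<And>K \<omega>. \<omega> \<notin> F - B K \<Longrightarrow> s K \<omega> = 0"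
    "\<And>K. AE \<omega> in M. \<omega> \<in> F - B K \<longrightarrow> \<phi> \<omega> ((1 / \<epsilon>) *\<^sub>R (u \<omega> - s K \<omega>)) \<le> \<delta>"
proof -
  obtain d where "\<exists>f :: nat \<Rightarrow> 'a \<Rightarrow> ennreal. (\<forall>j. f j \<in> borel_measurable M) \<and>
      (AE \<omega> in M. \<omega> \<in> F \<longrightarrow>
        (\<forall>j. \<phi> \<omega> ((1 / \<epsilon>) *\<^sub>R (u \<omega> - d j)) = f j \<omega>) \<and> (\<exists>j. f j \<omega> < \<delta>))"
    using countable_family_small_modular[OF u F \<open>\<epsilon> > 0\<close> \<open>\<delta> > 0\<close>] ..
  then obtain f where f: "(\<forall>j. f j \<in> borel_measurable M) \<and>
      (AE \<omega> in M. \<omega> \<in> F \<longrightarrow>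
        (\<forall>j. \<phi> \<omega> ((1 / \<epsilon>) *\<^sub>R (u \<omega> - d j)) = f j \<omega>) \<and> (\<exists>j. f j \<omega> < \<delta>))" ..
  then have [measurable]: "f j \<in> borel_measurable M" for j
    by simp
  from f have f_AE: "AE \<omega> in M. \<omega> \<in> F \<longrightarrow>
      (\<forall>j. \<phi> \<omega> ((1 / \<epsilon>) *\<^sub>R (u \<omega> - d j)) = f j \<omega>) \<and> (\<exists>j. f j \<omega> < \<delta>)"
    by simp
  define B where "B K = {\<omega> \<in> space M. \<omega> \<in> F \<and> (\<forall>j\<le>K. \<delta> < f j \<omega>)}" for K :: nat
  define s where "s K \<omega> = (if \<omega> \<in> F - B K then d (LEAST j. f j \<omega> \<le> \<delta>) else 0)" for K \<omega>
  have B_sets: "B K \<in> sets M" for K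
    using F(1) unfolding B_def by measurable
  have good_index: "\<exists>j\<le>K. f j \<omega> \<le> \<delta>" if "\<omega> \<in> F - B K" for K \<omega>
    using that sets.sets_into_space[OF F(1)] by (auto simp: B_def not_less)
  show thesis
  proof (rule that[of B s])
    show "B K \<in> sets M" "B K \<subseteq> F" for K
      using B_sets by (auto simp: B_def)
    show "s K \<omega> = 0" if "\<omega> \<notin> F - B K" for K \<omega>
      using that by (auto simp: s_def)
    show "AE \<omega> in M. (\<lambda>K. indicator (B K) \<omega> :: real) \<longlonglongrightarrow> 0"
      unfolding B_def using f_AE
      by (intro AE_indicator_no_good_index_tendsto_zero) (auto elim: eventually_mono)
    show "simple_function M (s K)" for K
      unfolding s_def using F(1) B_sets good_index
      by (intro simple_function_least_index[where K = K]) auto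
    show "AE \<omega> in M. \<omega> \<in> F - B K \<longrightarrow> \<phi> \<omega> ((1 / \<epsilon>) *\<^sub>R (u \<omega> - s K \<omega>)) \<le> \<delta>" for K
      using f_AE
    proof eventually_elim
      case (elim \<omega>)
      show ?case
      proof
        assume \<omega>: "\<omega> \<in> F - B K"
        then have "\<exists>j. f j \<omega> \<le> \<delta>"
          using good_index by blast
        then have "f (LEAST j. f j \<omega> \<le> \<delta>) \<omega> \<le> \<delta>"
          by (rule LeastI_ex)
        with elim \<omega> show "\<phi> \<omega> ((1 / \<epsilon>) *\<^sub>R (u \<omega> - s K \<omega>)) \<le> \<delta>"
          by (simp add: s_def)
      qed
    qed
  qed
qed

lemma AE_modular_diff_le_split:
  assumes u_S: "AE \<omega> in M. \<omega> \<notin> S \<longrightarrow> u \<omega> = 0" and "B \<subseteq> F" "F \<subseteq> S"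
    and s: "\<And>\<omega>. \<omega> \<notin> F - B \<Longrightarrow> s \<omega> = 0"
    and approx: "AE \<omega> in M. \<omega> \<in> F - B \<longrightarrow> \<phi> \<omega> ((1 / \<epsilon>) *\<^sub>R (u \<omega> - s \<omega>)) \<le> \<delta>"
  shows "AE \<omega> in M. \<phi> \<omega> ((1 / \<epsilon>) *\<^sub>R (u \<omega> - s \<omega>)) \<le> \<delta> * indicator (F - B) \<omega> +
    \<phi> \<omega> ((1 / \<epsilon>) *\<^sub>R (indicator (S - F) \<omega> *\<^sub>R u \<omega>)) + \<phi> \<omega> ((1 / \<epsilon>) *\<^sub>R (indicator B \<omega> *\<^sub>R u \<omega>))"
  using approx u_S AE_orlicz_function
proof eventually_elim
  case (elim \<omega>)
  then have "\<phi> \<omega> 0 = 0"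
    by (simp add: orlicz_function_def)
  consider "\<omega> \<in> F - B" | "\<omega> \<in> B" | "\<omega> \<in> S - F" | "\<omega> \<notin> S"
    using \<open>B \<subseteq> F\<close> \<open>F \<subseteq> S\<close> by blast
  then show ?case
  proof cases
    case 1
    then show ?thesis
      using elim(1) by (simp add: add.assoc add_increasing2)
  next
    case 2
    then show ?thesis
      using \<open>B \<subseteq> F\<close> s[of \<omega>] \<open>\<phi> \<omega> 0 = 0\<close> by auto
  next
    case 3
    then show ?thesis
      using \<open>B \<subseteq> F\<close> s[of \<omega>] \<open>\<phi> \<omega> 0 = 0\<close> by auto
  next
    case 4
    then have "s \<omega> = 0"
      using \<open>F \<subseteq> S\<close> s by blast
    then show ?thesis
      using 4 elim(2) \<open>\<phi> \<omega> 0 = 0\<close> by simp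
  qed
qed

lemma orlicz_modular_diff_le_split:
  assumes u: "strongly_measurable M u" "vanishes_outside_sigma_finite M u"
    and u_S: "AE \<omega> in M. \<omega> \<notin> S \<longrightarrow> u \<omega> = 0"
    and sets: "S - F \<in> sets M" "F \<in> sets M" "B \<in> sets M" and "B \<subseteq> F" "F \<subseteq> S"
    and s: "\<And>\<omega>. \<omega> \<notin> F - B \<Longrightarrow> s \<omega> = 0"
    and approx: "AE \<omega> in M. \<omega> \<in> F - B \<longrightarrow> \<phi> \<omega> ((1 / \<epsilon>) *\<^sub>R (u \<omega> - s \<omega>)) \<le> \<delta>"
  shows "orlicz_modular M \<phi> (\<lambda>\<omega>. (1 / \<epsilon>) *\<^sub>R (u \<omega> - s \<omega>)) \<le> \<delta> * emeasure M F +
    orlicz_modular M \<phi> (\<lambda>\<omega>. (1 / \<epsilon>) *\<^sub>R (indicator (S - F) \<omega> *\<^sub>R u \<omega>)) +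
    orlicz_modular M \<phi> (\<lambda>\<omega>. (1 / \<epsilon>) *\<^sub>R (indicator B \<omega> *\<^sub>R u \<omega>))"
proof -
  have cut_off: "strongly_measurable M (\<lambda>\<omega>. (1 / \<epsilon>) *\<^sub>R (indicator E \<omega> *\<^sub>R u \<omega>))"
    "vanishes_outside_sigma_finite M (\<lambda>\<omega>. (1 / \<epsilon>) *\<^sub>R (indicator E \<omega> *\<^sub>R u \<omega>))"
    if "E \<in> sets M" for E
    by (rule strongly_measurable_scaleR_const[OF strongly_measurable_indicator_scaleR[OF that u(1)]],
        rule vanishes_outside_sigma_finite_scaleR[OF vanishes_outside_sigma_finite_scaleR[OF u(2)],
          of "\<lambda>_. 1 / \<epsilon>"])
  have "(\<lambda>\<omega>. \<delta> * indicator (F - B) \<omega>) \<in> borel_measurable M"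
    using sets by simp
  then have "orlicz_modular M \<phi> (\<lambda>\<omega>. (1 / \<epsilon>) *\<^sub>R (u \<omega> - s \<omega>)) \<le> (\<integral>\<^sup>+ \<omega>. \<delta> * indicator (F - B) \<omega> \<partial>M) +
      orlicz_modular M \<phi> (\<lambda>\<omega>. (1 / \<epsilon>) *\<^sub>R (indicator (S - F) \<omega> *\<^sub>R u \<omega>)) +
      orlicz_modular M \<phi> (\<lambda>\<omega>. (1 / \<epsilon>) *\<^sub>R (indicator B \<omega> *\<^sub>R u \<omega>))"
    by (rule orlicz_modular_le_add[OF cut_off[OF sets(1)] cut_off[OF sets(3)] _
          AE_modular_diff_le_split[OF u_S \<open>B \<subseteq> F\<close> \<open>F \<subseteq> S\<close> s approx]])
  also have "(\<integral>\<^sup>+ \<omega>. \<delta> * indicator (F - B) \<omega> \<partial>M) \<le> \<delta> * emeasure M F"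
    using sets by (simp add: nn_integral_cmult_indicator emeasure_mono mult_left_mono)
  finally show ?thesis
    by (simp add: add_right_mono)
qed

lemma C_sigma_phi_approx_integrable_simple:
  assumes u: "u \<in> C_sigma_phi M \<phi>" and "\<epsilon> > 0"
  obtains s where "integrable_simple M s" "lux_norm M \<phi> (\<lambda>\<omega>. u \<omega> - s \<omega>) \<le> ennreal \<epsilon>"
proof -
  have u_sm: "strongly_measurable M u" and u_van: "vanishes_outside_sigma_finite M u"
    using u unfolding C_sigma_phi_def L_phi_def by auto
  have cut_off: "strongly_measurable M (\<lambda>\<omega>. indicator E \<omega> *\<^sub>R u \<omega>)"
    "vanishes_outside_sigma_finite M (\<lambda>\<omega>. indicator E \<omega> *\<^sub>R u \<omega>)" if "E \<in> sets M" for E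
    using strongly_measurable_indicator_scaleR[OF that u_sm] vanishes_outside_sigma_finite_scaleR[OF u_van]
    by auto
  have "ennreal (1/4 * \<epsilon>) > 0"
    using \<open>\<epsilon> > 0\<close> by simp
  then obtain S F where S: "sigma_finite_set M S" and u_S: "AE \<omega> in M. \<omega> \<notin> S \<longrightarrow> u \<omega> = 0"
    and F: "F \<in> sets M" "emeasure M F < \<infinity>" "F \<subseteq> S"
    and tail: "lux_norm M \<phi> (\<lambda>\<omega>. indicator (S - F) \<omega> *\<^sub>R u \<omega>) < ennreal (1/4 * \<epsilon>)"
    by (rule C_sigma_phi_tail_small[OF u])
  obtain \<delta> where "\<delta> > 0" and \<delta>_F: "\<delta> * emeasure M F \<le> ennreal (1/2)"
    using ennreal_small_multiple[OF F(2), of "1/2"] by auto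
  obtain B :: "nat \<Rightarrow> 'a set" and s :: "nat \<Rightarrow> 'a \<Rightarrow> 'b" where B: "\<And>K. B K \<in> sets M" "\<And>K. B K \<subseteq> F"
    and B_lim: "AE \<omega> in M. (\<lambda>K. indicator (B K) \<omega> :: real) \<longlonglongrightarrow> 0"
    and s: "\<And>K. simple_function M (s K)" "\<And>K \<omega>. \<omega> \<notin> F - B K \<Longrightarrow> s K \<omega> = 0"
    and s_approx: "\<And>K. AE \<omega> in M. \<omega> \<in> F - B K \<longrightarrow> \<phi> \<omega> ((1 / \<epsilon>) *\<^sub>R (u \<omega> - s K \<omega>)) \<le> \<delta>"
    using simple_approx_off_vanishing_sets[OF u_sm F(1,2) \<open>\<epsilon> > 0\<close> \<open>\<delta> > 0\<close>] by blast
  obtain K where bad: "lux_norm M \<phi> (\<lambda>\<omega>. indicator (B K) \<omega> *\<^sub>R u \<omega>) < ennreal (1/4 * \<epsilon>)"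
    by (rule C_sigma_phi_eventually_small[OF u B(1) B_lim \<open>ennreal (1/4 * \<epsilon>) > 0\<close>])
  have "S - F \<in> sets M"
    using sigma_finite_set_sets[OF S] F(1) by auto
  have "orlicz_modular M \<phi> (\<lambda>\<omega>. (1 / \<epsilon>) *\<^sub>R (u \<omega> - s K \<omega>)) \<le> \<delta> * emeasure M F +
      orlicz_modular M \<phi> (\<lambda>\<omega>. (1 / \<epsilon>) *\<^sub>R (indicator (S - F) \<omega> *\<^sub>R u \<omega>)) +
      orlicz_modular M \<phi> (\<lambda>\<omega>. (1 / \<epsilon>) *\<^sub>R (indicator (B K) \<omega> *\<^sub>R u \<omega>))"
    by (rule orlicz_modular_diff_le_split[OF u_sm u_van u_S \<open>S - F \<in> sets M\<close> F(1) B(1,2) F(3)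
          s(2) s_approx])
  also have "\<dots> \<le> ennreal (1/2) + ennreal (1/4) + ennreal (1/4)"
    using \<delta>_F tail bad \<open>\<epsilon> > 0\<close> cut_off[OF \<open>S - F \<in> sets M\<close>] cut_off[OF B(1)]
    by (intro add_mono modular_le_of_lux_norm_less) auto
  also have "\<dots> = 1"
    using ennreal_plus[of "1/2" "1/4"] ennreal_plus[of "1/2 + 1/4" "1/4"] by simp
  finally have "lux_norm M \<phi> (\<lambda>\<omega>. u \<omega> - s K \<omega>) \<le> ennreal \<epsilon>"
    using \<open>\<epsilon> > 0\<close> by (intro lux_norm_le) auto
  moreover have "integrable_simple M (s K)"
    unfolding integrable_simple_def using s F(1,2) by blast
  ultimately show thesis
    by (rule that[rotated])
qed

lemma C_sigma_phi_integrable_simple_dense: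
  assumes u: "u \<in> C_sigma_phi M \<phi>"
  shows "\<exists>s. (\<forall>n::nat. integrable_simple M (s n) \<and> s n \<in> L_phi M \<phi>) \<and>
    (\<lambda>n. lux_norm M \<phi> (\<lambda>\<omega>. u \<omega> - s n \<omega>)) \<longlonglongrightarrow> 0"
proof -
  have "\<forall>n::nat. \<exists>s. integrable_simple M s \<and> lux_norm M \<phi> (\<lambda>\<omega>. u \<omega> - s \<omega>) \<le> ennreal (1 / Suc n)"
  proof
    fix n :: nat
    have "1 / real (Suc n) > 0"
      by simp
    from C_sigma_phi_approx_integrable_simple[OF u this]
    show "\<exists>s. integrable_simple M s \<and> lux_norm M \<phi> (\<lambda>\<omega>. u \<omega> - s \<omega>) \<le> ennreal (1 / Suc n)"
      by blast
  qed
  from choice[OF this] obtain s where s: "\<forall>n. integrable_simple M (s n) \<and>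
      lux_norm M \<phi> (\<lambda>\<omega>. u \<omega> - s n \<omega>) \<le> ennreal (1 / Suc n)"
    by blast
  have u_sm: "strongly_measurable M u" and u_van: "vanishes_outside_sigma_finite M u"
    and "lux_norm M \<phi> u < \<infinity>"
    using u unfolding C_sigma_phi_def L_phi_def by auto
  then obtain \<alpha> where "\<alpha> > 0" "orlicz_modular M \<phi> (\<lambda>\<omega>. (1 / \<alpha>) *\<^sub>R u \<omega>) \<le> 1"
    unfolding lux_norm_less_iff by blast
  have "s n \<in> L_phi M \<phi>" for n
  proof -
    have sn: "strongly_measurable M (s n)" "vanishes_outside_sigma_finite M (s n)"
      using s strongly_measurable_simple_function integrable_simple_vanishes_outside_sigma_finite
      unfolding integrable_simple_def by blast+
    have "lux_norm M \<phi> (\<lambda>\<omega>. u \<omega> - s n \<omega>) < \<infinity>"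
      using s le_less_trans[of _ "ennreal (1 / Suc n)"] by auto
    then obtain \<beta> where "\<beta> > 0" "orlicz_modular M \<phi> (\<lambda>\<omega>. (1 / \<beta>) *\<^sub>R (u \<omega> - s n \<omega>)) \<le> 1"
      unfolding lux_norm_less_iff by blast
    then have "lux_norm M \<phi> (\<lambda>\<omega>. u \<omega> - (u \<omega> - s n \<omega>)) \<le> ennreal (\<alpha> + \<beta>)"
      using \<open>\<alpha> > 0\<close> \<open>orlicz_modular M \<phi> (\<lambda>\<omega>. (1 / \<alpha>) *\<^sub>R u \<omega>) \<le> 1\<close> u_sm u_van sn
      by (intro lux_norm_diff_le strongly_measurable_diff vanishes_outside_sigma_finite_diff) auto
    then show ?thesis
      using sn(1) unfolding L_phi_def by (simp add: le_less_trans)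
  qed
  moreover have "(\<lambda>n. lux_norm M \<phi> (\<lambda>\<omega>. u \<omega> - s n \<omega>)) \<longlonglongrightarrow> 0"
  proof (rule tendsto_sandwich[OF _ _ tendsto_const])
    show "(\<lambda>n. ennreal (1 / Suc n)) \<longlonglongrightarrow> 0"
      using tendsto_ennrealI[OF LIMSEQ_Suc[OF lim_const_over_n[of 1]]] by simp
  qed (use s in auto)
  ultimately show ?thesis
    using s by blast
qed

end

lemma orlicz_C_sigma_phi_integrable_simple_dense:
  fixes \<phi> :: "'a \<Rightarrow> 'b::banach \<Rightarrow> ennreal"
  assumes "orlicz_integrand M \<phi>" and u: "u \<in> C_sigma_phi M \<phi>"
  shows "\<exists>s. (\<forall>n::nat. integrable_simple M (s n) \<and> s n \<in> L_phi M \<phi>) \<and>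
    (\<lambda>n. lux_norm M \<phi> (\<lambda>\<omega>. u \<omega> - s n \<omega>)) \<longlonglongrightarrow> 0"
proof (cases "\<exists>e::'b. e \<noteq> 0")
  case True
  interpret nontrivial_orlicz_integrand M \<phi>
    using assms(1) True by unfold_locales
  show ?thesis
    by (rule C_sigma_phi_integrable_simple_dense[OF u])
next
  case False
  then show ?thesis
    using C_sigma_phi_zero_space[OF _ u] by blast
qed

theorem lemma3p4p9:
  fixes M :: "'a measure" and \<phi> :: "'a \<Rightarrow> 'b::banach \<Rightarrow> ennreal"
  assumes "emeasure M (space M) \<noteq> 0"
    and "orlicz_integrand M \<phi>"
  shows "C_sigma_phi M \<phi> \<subseteq> E_sigma_phi M \<phi> \<and>
         (real_valued_integrand M \<phi> \<longrightarrow>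
           (\<forall>u \<in> C_sigma_phi M \<phi>. \<exists>s. (\<forall>n::nat. integrable_simple M (s n)) \<and>
              ((\<lambda>n. lux_norm M \<phi> (\<lambda>\<omega>. u \<omega> - s n \<omega>)) \<longlonglongrightarrow> 0)))"
proof -
  note dense = orlicz_C_sigma_phi_integrable_simple_dense[OF assms(2)]
  have "C_sigma_phi M \<phi> \<subseteq> E_sigma_phi M \<phi>"
  proof
    fix u
    assume "u \<in> C_sigma_phi M \<phi>"
    with dense[OF this] show "u \<in> E_sigma_phi M \<phi>"
      unfolding E_sigma_phi_def E_phi_def C_sigma_phi_def integrable_simple_def by blast
  qed
  with dense show ?thesis
    by blast
qed

end
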